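(* Let $\lambda\in[0,\frac{\pi}{2})$ and let $(|B(\lambda)\rangle,\mathcal{M})$ be a maximally impossible quantum scenario with $|M_1|=|M_2|=N$ and $M_3=\{C_0,\dots,C_{n-1}\}$. Then for all $l,l_1,l_2\in\{0,\dots,n-1\}$, $\delta(\lambda,C_l)$ and $\beta(\lambda,C_{l_1})-\beta(\lambda,C_{l_2})$ are congruent modulo $2\pi$ to integer multiples of $\frac{\pi}{N}$.
   Context: For $\varphi\in\mathbb{R}$, $E_\varphi=\cos\varphi X+\sin\varphi Y$ is the equatorial measurement, with $+1$ eigenvector $|\varphi\rangle=\frac{1}{\sqrt2}(|0\rangle+e^{i\varphi}|1\rangle)$ and $-1$ eigenvector $|\varphi+\pi\rangle$; outcomes $+1,-1$ relabelled $0,1$; measurements identified with angles. A measurement scenario $\mathcal{M}=(M_1,M_2,M_3)$ consists of finite nonempty sets $M_i\subseteq[0,\pi)$ of angles for qubit $i$. For a three-qubit state $|\psi\rangle$, the event $(A,B,C)\to(a,b,c)$ with $(A,B,C)\in M_1\times M_2\times M_3$ is impossible if $(\langle A+a\pi|\otimes\langle B+b\pi|\otimes\langle C+c\pi|)|\psi\rangle=0$. For $\lambda\in[0,\frac{\pi}{2})$, $|v_\lambda\rangle=\cos\frac{\lambda}{2}|0\rangle+\sin\frac{\lambda}{2}|1\rangle$, $|w_\lambda\rangle=\sin\frac{\lambda}{2}|0\rangle+\cos\frac{\lambda}{2}|1\rangle$, and the interpolant state is $|B(\lambda)\rangle=\frac{1}{\sqrt2}(|00\rangle|v_\lambda\rangle+|11\rangle|w_\lambda\rangle)$.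 $(|B(\lambda)\rangle,\mathcal{M})$ is maximally impossible if for every $C\in M_3$ and $z\in\{0,1\}$: every $A\in M_1$ admits $B\in M_2$, $a,b\in\{0,1\}$ with $(A,B,C)\to(a,b,z)$ impossible, and every $B\in M_2$ admits $A\in M_1$, $a,b$ with $(A,B,C)\to(a,b,z)$ impossible. Define modulo $2\pi$: $\beta(\lambda,\varphi)=\varphi-2\arctan\left(\frac{\cos\frac{\lambda}{2}\sin\varphi}{\sin\frac{\lambda}{2}+\cos\frac{\lambda}{2}\cos\varphi}\right)$ and $\delta(\lambda,\varphi)=\beta(\lambda,\varphi+\pi)-\beta(\lambda,\varphi)$. *)

theory Defs
  imports Complex_Main
begin

text \<open>Computational basis indices are the naturals 0 and 1.
  The equatorial +1 eigenvector |phi> = (|0> + e^{i phi}|1>)/sqrt 2.\<close>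
definition eq_ket :: "real \<Rightarrow> nat \<Rightarrow> complex" where
  "eq_ket phi x = (if x = 0 then 1 / complex_of_real (sqrt 2)
                   else cis phi / complex_of_real (sqrt 2))"

definition v_ket :: "real \<Rightarrow> nat \<Rightarrow> complex" where
  "v_ket lam z = (if z = 0 then complex_of_real (cos (lam/2)) else complex_of_real (sin (lam/2)))"

definition w_ket :: "real \<Rightarrow> nat \<Rightarrow> complex" where
  "w_ket lam z = (if z = 0 then complex_of_real (sin (lam/2)) else complex_of_real (cos (lam/2)))"

definition B_state :: "real \<Rightarrow> nat \<Rightarrow> nat \<Rightarrow> nat \<Rightarrow> complex" where
  "B_state lam x y z = (1 / complex_of_real (sqrt 2)) *
     ((if x = 0 \<and> y = 0 then v_ket lam z else 0) + (if x = 1 \<and> y = 1 then w_ket lam z else 0))"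

definition impossible ::
  "(nat \<Rightarrow> nat \<Rightarrow> nat \<Rightarrow> complex) \<Rightarrow> real \<Rightarrow> real \<Rightarrow> real \<Rightarrow> nat \<Rightarrow> nat \<Rightarrow> nat \<Rightarrow> bool" where
  "impossible psi A B C a b c \<longleftrightarrow>
     (\<Sum>x\<in>{0,1}. \<Sum>y\<in>{0,1}. \<Sum>z\<in>{0,1}.
        cnj (eq_ket (A + real a * pi) x) * cnj (eq_ket (B + real b * pi) y) *
        cnj (eq_ket (C + real c * pi) z) * psi x y z) = 0"

definition scenario :: "real set \<Rightarrow> real set \<Rightarrow> real set \<Rightarrow> bool" where
  "scenario M1 M2 M3 \<longleftrightarrow>
     (\<forall>M\<in>{M1, M2, M3}. finite M \<and> M \<noteq> {} \<and> M \<subseteq> {0..<pi})"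

definition maximally_impossible ::
  "(nat \<Rightarrow> nat \<Rightarrow> nat \<Rightarrow> complex) \<Rightarrow> real set \<Rightarrow> real set \<Rightarrow> real set \<Rightarrow> bool" where
  "maximally_impossible psi M1 M2 M3 \<longleftrightarrow>
     (\<forall>C\<in>M3. \<forall>z\<in>{0,1}.
        (\<forall>A\<in>M1. \<exists>B\<in>M2. \<exists>a\<in>{0,1}. \<exists>b\<in>{0,1}. impossible psi A B C a b z) \<and>
        (\<forall>B\<in>M2. \<exists>A\<in>M1. \<exists>a\<in>{0,1}. \<exists>b\<in>{0,1}. impossible psi A B C a b z))"

text \<open>Where the denominator vanishes (the numerator then does not,
  for lambda in [0, pi/2)), the arctangent is +-pi/2, so 2 arctan = +-pi = pi (mod 2 pi).\<close>
definition beta :: "real \<Rightarrow> real \<Rightarrow> real" where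
  "beta lam phi =
     (let d = sin (lam/2) + cos (lam/2) * cos phi in
      if d = 0 then phi - pi
      else phi - 2 * arctan (cos (lam/2) * sin phi / d))"

definition delta :: "real \<Rightarrow> real \<Rightarrow> real" where
  "delta lam phi = beta lam (phi + pi) - beta lam phi"

definition cong_2pi :: "real \<Rightarrow> real \<Rightarrow> bool" where
  "cong_2pi x y \<longleftrightarrow> (\<exists>m::int. x - y = 2 * pi * of_int m)"

end

theory Submission
  imports Defs
begin

text \<open>Up to a nonzero factor, the amplitude of \<open>(A,B,C) \<rightarrow> (a,b,z)\<close> on \<open>|B(\<lambda>)\<rangle>\<close> is
  \<open>\<langle>C'|v\<^sub>\<lambda>\<rangle> + e\<^sup>-\<^sup>i\<^sup>X \<langle>C'|w\<^sub>\<lambda>\<rangle>\<close> with \<open>C' = C + z\<pi>\<close> and \<open>X = A + B + (a+b)\<pi>\<close>. The second overlap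
  is the first one rotated by the phase \<open>\<beta>(\<lambda>,C')\<close>, and the first one never vanishes for
  \<open>\<lambda> < \<pi>/2\<close>; so the event is impossible only if \<open>A + B \<equiv> \<beta>(\<lambda>,C') (mod \<pi>)\<close>.
  For fixed \<open>C'\<close>, maximal impossibility pairs every \<open>A \<in> M\<^sub>1\<close> with some \<open>B \<in> M\<^sub>2\<close> in this way;
  as the angles of \<open>M\<^sub>1\<close> lie in \<open>[0,\<pi>)\<close> the pairing is injective, hence a bijection, and
  summing over it gives \<open>\<Sigma>M\<^sub>1 + \<Sigma>M\<^sub>2 \<equiv> N \<beta>(\<lambda>,C') (mod \<pi>)\<close>. The left side does not depend
  on \<open>C'\<close>, so any two values \<open>\<beta>(\<lambda>,C')\<close> differ by a multiple of \<open>\<pi>/N\<close>.\<close>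

text \<open>The overlaps \<open>\<surd>2 \<langle>\<phi>|v\<^sub>\<lambda>\<rangle>\<close> and \<open>\<surd>2 \<langle>\<phi>|w\<^sub>\<lambda>\<rangle>\<close>.\<close>

definition v_overlap :: "real \<Rightarrow> real \<Rightarrow> complex" where
  "v_overlap lam phi = of_real (cos (lam/2)) + cis (-phi) * of_real (sin (lam/2))"

definition w_overlap :: "real \<Rightarrow> real \<Rightarrow> complex" where
  "w_overlap lam phi = of_real (sin (lam/2)) + cis (-phi) * of_real (cos (lam/2))"

lemma impossible_B_state_iff:
  "impossible (B_state lam) A B C a b z \<longleftrightarrow>
     v_overlap lam (C + real z * pi) +
     cis (- (A + real a * pi + (B + real b * pi))) * w_overlap lam (C + real z * pi) = 0"
proof -
  define r where "r = 1 / complex_of_real (sqrt 2)"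
  have e0: "cnj (eq_ket phi 0) = r" for phi
    by (simp add: r_def eq_ket_def)
  have e1: "cnj (eq_ket phi (Suc 0)) = cis (-phi) * r" for phi
    by (simp add: r_def eq_ket_def cis_cnj)
  have split_cis: "cis (- (A + real a * pi + (B + real b * pi)))
      = cis (- (A + real a * pi)) * cis (- (B + real b * pi))"
    by (simp add: cis_mult)
  have "(\<Sum>x\<in>{0,1}. \<Sum>y\<in>{0,1}. \<Sum>w\<in>{0,1}.
          cnj (eq_ket (A + real a * pi) x) * cnj (eq_ket (B + real b * pi) y) *
          cnj (eq_ket (C + real z * pi) w) * B_state lam x y w)
      = r^4 * (v_overlap lam (C + real z * pi) +
          cis (- (A + real a * pi + (B + real b * pi))) * w_overlap lam (C + real z * pi))"
    unfolding split_cis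
    by (simp add: e0 e1 B_state_def r_def v_ket_def w_ket_def v_overlap_def w_overlap_def
        algebra_simps power4_eq_xxxx del: minus_add_distrib)
  then show ?thesis
    by (simp add: impossible_def r_def)
qed

lemma cis_mult_v_overlap:
  "cis phi * v_overlap lam phi =
     Complex (sin (lam/2) + cos (lam/2) * cos phi) (cos (lam/2) * sin phi)"
  by (simp add: v_overlap_def distrib_left mult.assoc [symmetric] cis_mult complex_eq_iff)

lemma w_overlap_eq_cnj: "w_overlap lam phi = cnj (cis phi * v_overlap lam phi)"
  by (simp add: cis_mult_v_overlap w_overlap_def complex_eq_iff cis.sel)

lemma cnj_Complex_eq_cis_arctan:
  fixes u w :: real
  assumes "u \<noteq> 0"
  shows "cnj (Complex u w) = cis (- 2 * arctan (w / u)) * Complex u w"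
proof -
  define \<alpha> where "\<alpha> = arctan (w / u)"
  define \<rho> where "\<rho> = u * sqrt (1 + (w / u)\<^sup>2)"
  have "1 + (w / u)\<^sup>2 > 0"
    by (simp add: add_pos_nonneg)
  then have polar: "Complex u w = of_real \<rho> * cis \<alpha>"
    using assms by (simp add: \<rho>_def \<alpha>_def complex_eq_iff cos_arctan sin_arctan)
  have "cis (- 2 * \<alpha>) * Complex u w = of_real \<rho> * cis (- \<alpha>)"
    by (simp add: polar cis_mult mult.left_commute)
  also have "\<dots> = cnj (Complex u w)"
    by (simp add: polar cis_cnj)
  finally show ?thesis
    by (simp add: \<alpha>_def)
qed

lemma w_overlap_eq_cis_beta: "w_overlap lam phi = cis (beta lam phi) * v_overlap lam phi"
proof -
  define u where "u = sin (lam/2) + cos (lam/2) * cos phi"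
  define w where "w = cos (lam/2) * sin phi"
  have uw: "cis phi * v_overlap lam phi = Complex u w"
    by (simp add: cis_mult_v_overlap u_def w_def)
  have "cnj (Complex u w) = cis (beta lam phi - phi) * Complex u w"
  proof (cases "u = 0")
    case True
    then show ?thesis
      by (simp add: beta_def u_def complex_eq_iff)
  next
    case False
    then show ?thesis
      using cnj_Complex_eq_cis_arctan [OF False, of w]
      by (simp add: beta_def Let_def u_def [symmetric] w_def [symmetric])
  qed
  then show ?thesis
    by (simp add: w_overlap_eq_cnj uw [symmetric] mult.assoc [symmetric] cis_mult)
qed

lemma sin_less_cos:
  fixes x :: real
  assumes "0 \<le> x" "x < pi / 4"
  shows "sin x < cos x"
proof -
  have "sin x < sin (pi/2 - x)"
    using assms by (intro sin_monotone_2pi) auto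
  then show ?thesis
    by (simp add: sin_cos_eq)
qed

lemma v_overlap_nonzero:
  assumes "0 \<le> lam" "lam < pi / 2"
  shows "v_overlap lam phi \<noteq> 0"
proof -
  have "0 \<le> sin (lam/2)"
    using assms by (intro sin_ge_zero) auto
  moreover have "sin (lam/2) < cos (lam/2)"
    using assms by (intro sin_less_cos) auto
  moreover have "\<bar>cos (lam/2)\<bar> - \<bar>sin (lam/2)\<bar> \<le> norm (v_overlap lam phi)"
    using norm_diff_ineq [of "of_real (cos (lam/2))" "cis (-phi) * of_real (sin (lam/2))"]
    by (simp add: v_overlap_def norm_mult)
  ultimately have "0 < norm (v_overlap lam phi)"
    by arith
  then show ?thesis
    by auto
qed

lemma impossible_B_state_angle_sum:
  assumes "0 \<le> lam" "lam < pi / 2" "impossible (B_state lam) A B C a b z"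
  shows "\<exists>k::int. A + B = beta lam (C + real z * pi) + of_int k * pi"
proof -
  define \<beta> where "\<beta> = beta lam (C + real z * pi)"
  define X where "X = A + real a * pi + (B + real b * pi)"
  define v where "v = v_overlap lam (C + real z * pi)"
  have "v + cis (- X) * (cis \<beta> * v) = 0"
    using assms(3) by (simp add: impossible_B_state_iff w_overlap_eq_cis_beta X_def \<beta>_def v_def)
  then have "v * (1 + cis (\<beta> - X)) = 0"
    by (simp add: algebra_simps cis_mult)
  moreover have "v \<noteq> 0"
    using assms(1,2) by (simp add: v_def v_overlap_nonzero)
  ultimately have "cis (\<beta> - X) = -1"
    by (simp add: add_eq_0_iff)
  then have "cos (\<beta> - X) = -1"
    by (metis cis.sel(1) complex_minus uminus_complex.sel(1) one_complex.sel(1))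
  then have "cos (\<beta> - X + pi) = 1"
    by simp
  then obtain m :: int where "\<beta> - X + pi = of_int m * 2 * pi"
    using cos_one_2pi_int by blast
  then have "A + B = \<beta> + of_int (1 - 2 * m - int a - int b) * pi"
    by (simp add: X_def algebra_simps)
  then show ?thesis
    unfolding \<beta>_def by blast
qed

lemma sum_add_sum_eq_mod_period:
  fixes M1 M2 :: "real set" and p t :: real
  assumes "0 < p" "finite M1" "finite M2" "M1 \<subseteq> {0..<p}" "card M1 = card M2"
    and pairing: "\<And>A. A \<in> M1 \<Longrightarrow> \<exists>B\<in>M2. \<exists>k::int. A + B = t + of_int k * p"
  shows "\<exists>K::int. \<Sum>M1 + \<Sum>M2 = real (card M1) * t + of_int K * p"
proof -
  obtain f and g :: "real \<Rightarrow> int"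
    where f: "\<And>A. A \<in> M1 \<Longrightarrow> f A \<in> M2"
      and g: "\<And>A. A \<in> M1 \<Longrightarrow> A + f A = t + of_int (g A) * p"
    using pairing by metis
  have "inj_on f M1"
  proof (rule inj_onI)
    fix x y assume xy: "x \<in> M1" "y \<in> M1" "f x = f y"
    then have "x - y = of_int (g x - g y) * p"
      using g [of x] g [of y] by (simp add: algebra_simps)
    moreover have "x \<in> {0..<p}" "y \<in> {0..<p}"
      using xy(1,2) assms(4) by auto
    then have "\<bar>x - y\<bar> < p"
      by auto
    ultimately have "of_int \<bar>g x - g y\<bar> * p < 1 * p"
      using assms(1) by (simp add: abs_mult)
    then have "g x = g y"
      using assms(1) mult_less_cancel_right_pos [of p] by fastforce
    then show "x = y"
      using \<open>x - y = _\<close> by simp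
  qed
  moreover have "f ` M1 = M2"
    using f \<open>inj_on f M1\<close> assms(3,5) by (intro card_subset_eq) (auto simp: card_image)
  ultimately have "\<Sum>M2 = sum f M1"
    by (metis sum.reindex_cong)
  then have "\<Sum>M1 + \<Sum>M2 = (\<Sum>A\<in>M1. t + of_int (g A) * p)"
    by (simp add: sum.distrib [symmetric] g cong: sum.cong)
  also have "\<dots> = real (card M1) * t + of_int (sum g M1) * p"
    by (simp add: sum.distrib sum_distrib_right)
  finally show ?thesis
    by blast
qed

text \<open>Only the first half of maximal impossibility (every \<open>A\<close> has a partner \<open>B\<close>) is needed.\<close>

lemma maximally_impossible_angle_sum:
  assumes "0 \<le> lam" "lam < pi / 2" "scenario M1 M2 M3"
    and "maximally_impossible (B_state lam) M1 M2 M3"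
    and "card M1 = card M2" "C \<in> M3" "z \<in> {0, 1}"
  shows "\<exists>K::int. \<Sum>M1 + \<Sum>M2 = real (card M1) * beta lam (C + real z * pi) + of_int K * pi"
proof (rule sum_add_sum_eq_mod_period)
  show "finite M1" "finite M2" "M1 \<subseteq> {0..<pi}"
    using assms(3) by (auto simp: scenario_def)
  fix A assume "A \<in> M1"
  then obtain B a b where "B \<in> M2" "impossible (B_state lam) A B C a b z"
    using assms(4,6,7) unfolding maximally_impossible_def by blast
  then show "\<exists>B\<in>M2. \<exists>k::int. A + B = beta lam (C + real z * pi) + of_int k * pi"
    using impossible_B_state_angle_sum [OF assms(1,2)] by blast
qed (use assms(5) in auto)

theorem lemma14:
  fixes lam :: real and M1 M2 M3 :: "real set" and N n :: nat and C :: "nat \<Rightarrow> real"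
  assumes "0 \<le> lam" and "lam < pi / 2"
    and "scenario M1 M2 M3"
    and "maximally_impossible (B_state lam) M1 M2 M3"
    and "card M1 = N" and "card M2 = N"
    and "M3 = C ` {..<n}"
  shows "(\<forall>l<n. \<exists>k::int. cong_2pi (delta lam (C l)) (of_int k * pi / real N)) \<and>
         (\<forall>l1<n. \<forall>l2<n. \<exists>k::int.
           cong_2pi (beta lam (C l1) - beta lam (C l2)) (of_int k * pi / real N))"
proof -
  have "N > 0"
    using assms(3,5) by (auto simp: scenario_def card_gt_0_iff)
  have angle_sum: "\<exists>K::int. \<Sum>M1 + \<Sum>M2 = real N * beta lam (C l + real z * pi) + of_int K * pi"
    if "l < n" "z \<in> {0, 1}" for l z
    using maximally_impossible_angle_sum [OF assms(1-4)] that assms(5-7) by auto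
  have beta_diff: "\<exists>k::int. cong_2pi (beta lam (C l1 + real z1 * pi) - beta lam (C l2 + real z2 * pi))
      (of_int k * pi / real N)"
    if l: "l1 < n" "l2 < n" and z: "z1 \<in> {0, 1}" "z2 \<in> {0, 1}" for l1 l2 z1 z2
  proof -
    obtain K1 K2 :: int
      where "\<Sum>M1 + \<Sum>M2 = real N * beta lam (C l1 + real z1 * pi) + of_int K1 * pi"
        and "\<Sum>M1 + \<Sum>M2 = real N * beta lam (C l2 + real z2 * pi) + of_int K2 * pi"
      using angle_sum [OF l(1) z(1)] angle_sum [OF l(2) z(2)] by blast
    then have "beta lam (C l1 + real z1 * pi) - beta lam (C l2 + real z2 * pi)
        = of_int (K2 - K1) * pi / real N"
      using \<open>N > 0\<close> by (simp add: field_simps)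
    then show ?thesis
      unfolding cong_2pi_def by (metis diff_self mult_zero_right of_int_0)
  qed
  show ?thesis
    using beta_diff [of _ _ 1 0] beta_diff [of _ _ 0 0] by (auto simp: delta_def)
qed

end
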